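(* Let $E_0,E_1$ be Hilbert spaces, $d,\nu\in\mathbb{R}$, and $p\in\widetilde{\mathbf S}^{d,\nu}_{\mathrm{Hom}}(\mathbb{R}^{n-1}\times\overline{\mathbb{R}}_+;\mathcal L(E_0,E_1))$. Assume (1) $p(x',\xi',\mu)$ is invertible whenever $\xi'\neq0$, and $\|p(x',\xi',\mu)^{-1}|\xi'|^\nu\|_{\mathcal L(E_1,E_0)}\lesssim 1$ uniformly for all $x'\in\mathbb{R}^{n-1}$ and all $(\xi',\mu)\in\mathbb{R}^{n-1}\times\overline{\mathbb{R}}_+$ with $|\xi'|^2+\mu^2=1$, $\xi'\ne0$; (2) the principal angular symbol $p_{\langle\nu\rangle}(x',\xi')$ is invertible whenever $\xi'\ne0$, and $\|p_{\langle\nu\rangle}(x',\xi')^{-1}\|_{\mathcal L(E_1,E_0)}\lesssim1$ uniformly for $x'\in\mathbb{R}^{n-1}$, $|\xi'|=1$. Then $p^{-1}\in\widetilde{\mathbf S}^{-d,-\nu}_{\mathrm{Hom}}(\mathbb{R}^{n-1}\times\overline{\mathbb{R}}_+;\mathcal L(E_1,E_0))$.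
   Context: For a Fréchet (here Banach) space $F$ (here $F=\mathcal L(E_0,E_1)$ with the operator norm), $\widetilde{\mathbf S}^{d,\nu}_{\mathrm{Hom}}(\mathbb{R}^{n-1}\times\overline{\mathbb{R}}_+;F)$ is the space of smooth $F$-valued functions $p(x',\xi',\mu)$ on $\mathbb{R}^{n-1}\times(\mathbb{R}^{n-1}\setminus\{0\})\times\overline{\mathbb{R}}_+$, positively homogeneous of degree $d$ in $(\xi',\mu)$, such that the function $(x',r,\phi)\mapsto r^{-\nu}p(x',r\phi,\sqrt{1-r^2})$, $(r,\phi)\in(0,1]\times\mathbb{S}^{n-2}$, extends to an element of $\mathscr C^\infty_b(\mathbb{R}^{n-1}_{x'},\mathscr C^\infty([0,1]\times\mathbb{S}^{n-2};F))$ (smooth in $x'$, all $x'$-derivatives bounded in that Fréchet space). The principal angular symbol is $p_{\langle\nu\rangle}(x',\xi')=|\xi'|^\nu\lim_{r\to0+}r^{-\nu}p\big(x',r\xi'/|\xi'|,\sqrt{1-r^2}\big)$, $\xi'\ne0$. *)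

theory Defs
  imports "HOL-Analysis.Analysis"
begin

text \<open>C-infinity on an arbitrary set S (one-sided at boundary points): there is a
family D of iterated directional derivatives, D [] = f on S, and the derivative
of D vs within S at x is the linear map v maps-to D (v # vs) x.\<close>
definition smooth_on :: "'a::real_normed_vector set \<Rightarrow> ('a \<Rightarrow> 'b::real_normed_vector) \<Rightarrow> bool" where
  "smooth_on S f \<longleftrightarrow> (\<exists>D :: 'a list \<Rightarrow> 'a \<Rightarrow> 'b.
      (\<forall>x\<in>S. D [] x = f x) \<and>
      (\<forall>vs. \<forall>x\<in>S. (D vs has_derivative (\<lambda>v. D (v # vs) x)) (at x within S)))"

definition smooth_bounded_on :: "'a::euclidean_space set \<Rightarrow> ('a \<Rightarrow> 'b::real_normed_vector) \<Rightarrow> bool" where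
  "smooth_bounded_on S f \<longleftrightarrow> (\<exists>D :: 'a list \<Rightarrow> 'a \<Rightarrow> 'b.
      (\<forall>x\<in>S. D [] x = f x) \<and>
      (\<forall>vs. \<forall>x\<in>S. (D vs has_derivative (\<lambda>v. D (v # vs) x)) (at x within S)) \<and>
      (\<forall>vs \<in> lists Basis. bounded (D vs ` S)))"

definition blinvertible :: "('a::real_normed_vector \<Rightarrow>\<^sub>L 'b::real_normed_vector) \<Rightarrow> bool" where
  "blinvertible A \<longleftrightarrow> (\<exists>B. B o\<^sub>L A = id_blinfun \<and> A o\<^sub>L B = id_blinfun)"

definition blinv :: "('a::real_normed_vector \<Rightarrow>\<^sub>L 'b::real_normed_vector) \<Rightarrow> ('b \<Rightarrow>\<^sub>L 'a)" where
  "blinv A = (SOME B. B o\<^sub>L A = id_blinfun \<and> A o\<^sub>L B = id_blinfun)"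

text \<open>Annulus, an open neighbourhood of the unit sphere S^{n-2} in R^{n-1}.\<close>
definition annulus :: "('n::finite) itself \<Rightarrow> (real^'n) set" where
  "annulus _ = {\<phi>. 1/2 < norm \<phi> \<and> norm \<phi> < 2}"

text \<open>The symbol class tilde-S^{d,nu}_Hom(R^{n-1} x closed R_+; F), with
R^{n-1} rendered as real^'n.  A symbol is a function p x' xi' mu; only its values
on the domain xi' \<noteq> 0, mu \<ge> 0 matter.\<close>
definition S_Hom :: "real \<Rightarrow> real \<Rightarrow> (real^'n \<Rightarrow> real^'n \<Rightarrow> real \<Rightarrow> 'f::real_normed_vector) set" where
  "S_Hom d \<nu> = {p.
     smooth_on (UNIV \<times> (UNIV - {0}) \<times> {0..}) (\<lambda>(x, \<xi>, \<mu>). p x \<xi> \<mu>) \<and>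
     (\<forall>x \<xi> \<mu> t. \<xi> \<noteq> 0 \<and> 0 \<le> \<mu> \<and> 0 < t \<longrightarrow> p x (t *\<^sub>R \<xi>) (t * \<mu>) = t powr d *\<^sub>R p x \<xi> \<mu>) \<and>
     (\<exists>q :: (real^'n) \<times> real \<times> (real^'n) \<Rightarrow> 'f.
        smooth_bounded_on (UNIV \<times> {0..1} \<times> annulus TYPE('n)) q \<and>
        (\<forall>x r \<phi>. 0 < r \<and> r \<le> 1 \<and> norm \<phi> = 1 \<longrightarrow>
           q (x, r, \<phi>) = r powr (-\<nu>) *\<^sub>R p x (r *\<^sub>R \<phi>) (sqrt (1 - r\<^sup>2))))}"

definition principal_angular_symbol ::
  "real \<Rightarrow> (real^'n \<Rightarrow> real^'n \<Rightarrow> real \<Rightarrow> 'f::real_normed_vector) \<Rightarrow> real^'n \<Rightarrow> real^'n \<Rightarrow> 'f" where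
  "principal_angular_symbol \<nu> p x \<xi> =
     (norm \<xi> powr \<nu>) *\<^sub>R
       Lim (at_right 0) (\<lambda>r. r powr (-\<nu>) *\<^sub>R p x (r *\<^sub>R (inverse (norm \<xi>) *\<^sub>R \<xi>)) (sqrt (1 - r\<^sup>2)))"

end

(* Inversion acts pointwise, so p^-1 is positively homogeneous of degree -d, and it is smooth
   because (F^-1)' = - F^-1 F' F^-1.
   The angular representative q of p equals r^-nu p only on the unit sphere |phi| = 1, so the
   representative of p^-1 is taken to be (x, r, phi) |-> q (x, r, phi / |phi|)^-1.  On the sphere,
   q^-1 is bounded by hypothesis (1) for r > 0, and at r = 0 the value of q is the principal
   angular symbol, whose inverse is bounded by hypothesis (2).  Differentiating through
   phi / |phi| only produces coefficients that are polynomials in phi and 1 / |phi|, which are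
   bounded on the annulus; hence all derivatives of the new representative stay bounded. *)

theory Submission
  imports Defs
begin

section \<open>Inverses of bounded linear operators\<close>

interpretation blinfun_compose: bounded_bilinear blinfun_compose
  by (rule bounded_bilinear_blinfun_compose)

lemma blinfun_compose_assoc: "(a o\<^sub>L b) o\<^sub>L c = a o\<^sub>L (b o\<^sub>L c)"
  by (rule blinfun_eqI) simp

lemma blinfun_compose_id [simp]: "a o\<^sub>L id_blinfun = a" "id_blinfun o\<^sub>L a = a"
  by (auto intro: blinfun_eqI)

lemma (in bounded_bilinear) bounded_image_prod:
  assumes "bounded (f ` S)" "bounded (g ` S)"
  shows "bounded ((\<lambda>x. prod (f x) (g x)) ` S)"
proof -
  obtain B C where B: "\<And>x. x \<in> S \<Longrightarrow> norm (f x) \<le> B" and C: "\<And>x. x \<in> S \<Longrightarrow> norm (g x) \<le> C"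
    using assms by (auto simp: bounded_iff)
  obtain K where K: "\<And>a b. norm (prod a b) \<le> norm a * norm b * K" "K > 0"
    using pos_bounded by blast
  have "norm (prod (f x) (g x)) \<le> B * C * K" if "x \<in> S" for x
  proof -
    have "norm (prod (f x) (g x)) \<le> norm (f x) * norm (g x) * K"
      by (rule K(1))
    also have "\<dots> \<le> B * C * K"
      using B[OF that] C[OF that] K(2) by (intro mult_right_mono mult_mono') auto
    finally show ?thesis .
  qed
  then show ?thesis
    by (auto simp: bounded_iff)
qed

lemma (in bounded_bilinear) has_derivative_vanishing_factor:
  assumes f: "(f \<longlongrightarrow> f x) (at x within S)"
    and g: "(g has_derivative g') (at x within S)" and g0: "g x = 0"
  shows "((\<lambda>y. prod (f y) (g y)) has_derivative (\<lambda>h. prod (f x) (g' h))) (at x within S)"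
proof -
  obtain K where K: "\<And>a b. norm (prod a b) \<le> norm a * norm b * K" "K > 0"
    using pos_bounded by blast
  obtain KG where KG: "\<And>h. norm (g' h) \<le> norm h * KG"
    using bounded_linear.bounded[OF has_derivative_bounded_linear[OF g]] by blast
  define Ng where "Ng y = norm (g y - g x - g' (y - x)) / norm (y - x)" for y
  show ?thesis
  proof (rule has_derivativeI_sandwich[of 1])
    show "bounded_linear (\<lambda>h. prod (f x) (g' h))"
      using has_derivative_bounded_linear[OF g] by (rule bounded_linear_compose[OF bounded_linear_right])
    have "(Ng \<longlongrightarrow> 0) (at x within S)"
      using g by (simp add: has_derivative_iff_norm Ng_def[abs_def])
    then have "((\<lambda>y. norm (f y) * Ng y * K + norm (f y - f x) * KG * K)
        \<longlongrightarrow> norm (f x) * 0 * K + norm (f x - f x) * KG * K) (at x within S)"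
      by (intro tendsto_intros f)
    then show "((\<lambda>y. norm (f y) * Ng y * K + norm (f y - f x) * KG * K) \<longlongrightarrow> 0) (at x within S)"
      by simp
  next
    fix y
    assume "y \<noteq> x"
    have "norm (prod (f y) (g y) - prod (f x) (g x) - prod (f x) (g' (y - x)))
        = norm (prod (f y) (g y - g x - g' (y - x)) + prod (f y - f x) (g' (y - x)))"
      by (simp add: g0 diff_left diff_right zero_right)
    also have "\<dots> \<le> norm (f y) * norm (g y - g x - g' (y - x)) * K + norm (f y - f x) * norm (g' (y - x)) * K"
      by (intro order_trans[OF norm_triangle_ineq add_mono] K(1))
    also have "\<dots> \<le> norm (f y) * norm (g y - g x - g' (y - x)) * K + norm (f y - f x) * (norm (y - x) * KG) * K"
      using K(2) KG[of "y - x"] by (intro add_left_mono mult_right_mono mult_left_mono) auto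
    also have "\<dots> = (norm (f y) * Ng y * K + norm (f y - f x) * KG * K) * norm (y - x)"
      using \<open>y \<noteq> x\<close> by (simp add: Ng_def algebra_simps)
    finally show "norm (prod (f y) (g y) - prod (f x) (g x) - prod (f x) (g' (y - x))) / norm (y - x)
        \<le> norm (f y) * Ng y * K + norm (f y - f x) * KG * K"
      using \<open>y \<noteq> x\<close> by (simp add: divide_le_eq)
  qed simp
qed

lemma blinv_compose_cancel:
  assumes "blinvertible A"
  shows "blinv A o\<^sub>L A = id_blinfun" and "A o\<^sub>L blinv A = id_blinfun"
  using someI_ex[OF assms[unfolded blinvertible_def]] unfolding blinv_def by auto

lemma blinv_apply_cancel:
  assumes "blinvertible A"
  shows "blinv A (A u) = u" and "A (blinv A w) = w"
proof -
  have "(blinv A o\<^sub>L A) u = u" "(A o\<^sub>L blinv A) w = w"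
    by (simp_all add: blinv_compose_cancel[OF assms])
  then show "blinv A (A u) = u" "A (blinv A w) = w"
    by simp_all
qed

lemma blinv_eqI:
  assumes "B o\<^sub>L A = id_blinfun" "A o\<^sub>L B = id_blinfun"
  shows "blinv A = B"
proof -
  have "blinvertible A"
    using assms unfolding blinvertible_def by blast
  then have "blinv A = (blinv A o\<^sub>L A) o\<^sub>L B"
    by (simp add: blinfun_compose_assoc assms(2))
  then show ?thesis
    by (simp add: blinv_compose_cancel[OF \<open>blinvertible A\<close>] assms)
qed

lemma blinv_scaleR:
  assumes "blinvertible A" "c \<noteq> 0"
  shows "blinvertible (c *\<^sub>R A)" and "blinv (c *\<^sub>R A) = inverse c *\<^sub>R blinv A"
proof -
  have "(inverse c *\<^sub>R blinv A) o\<^sub>L (c *\<^sub>R A) = id_blinfun" "(c *\<^sub>R A) o\<^sub>L (inverse c *\<^sub>R blinv A) = id_blinfun"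
    using blinv_compose_cancel[OF assms(1)] assms(2)
    by (simp_all add: blinfun_compose.scaleR_left blinfun_compose.scaleR_right)
  then show "blinvertible (c *\<^sub>R A)" "blinv (c *\<^sub>R A) = inverse c *\<^sub>R blinv A"
    unfolding blinvertible_def by (auto intro: blinv_eqI)
qed

lemma blinv_powr_scaleR:
  assumes "blinvertible A" "0 < t"
  shows "blinv (t powr a *\<^sub>R A) = t powr (- a) *\<^sub>R blinv A"
  using blinv_scaleR(2)[OF assms(1)] assms(2) by (simp add: powr_minus)

lemma blinv_diff:
  assumes "blinvertible A" "blinvertible B"
  shows "blinv B - blinv A = - (blinv B o\<^sub>L (B - A) o\<^sub>L blinv A)"
  by (rule blinfun_eqI)
    (simp add: blinfun.bilinear_simps blinv_apply_cancel assms)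

lemma norm_blinv_perturbation_le:
  assumes "blinvertible A" "blinvertible B" and small: "norm (blinv A) * norm (B - A) \<le> 1/2"
  shows "norm (blinv B) \<le> 2 * norm (blinv A)"
proof (rule norm_blinfun_bound)
  show "0 \<le> 2 * norm (blinv A)" by simp
  fix w
  define u where "u = blinv B w"
  have "norm u = norm (blinv A (B u - (B - A) u))"
    by (simp add: blinfun.diff_left blinv_apply_cancel assms(1))
  also have "\<dots> \<le> norm (blinv A) * (norm w + norm (B - A) * norm u)"
    by (rule order_trans[OF norm_blinfun mult_left_mono])
      (auto simp: u_def blinv_apply_cancel assms(2) intro!: order_trans[OF norm_triangle_ineq4] norm_blinfun)
  also have "\<dots> \<le> norm (blinv A) * norm w + norm u / 2"
    using mult_right_mono[OF small norm_ge_zero[of u]] by (simp add: algebra_simps)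
  finally show "norm (blinv B w) \<le> 2 * norm (blinv A) * norm w"
    by (simp add: u_def)
qed

lemma blinv_tendsto_within:
  assumes F: "(F \<longlongrightarrow> F y) (at y within S)"
    and inv: "\<And>z. z \<in> S \<Longrightarrow> blinvertible (F z)" and "y \<in> S"
  shows "((\<lambda>z. blinv (F z)) \<longlongrightarrow> blinv (F y)) (at y within S)"
proof -
  define M where "M = norm (blinv (F y))"
  have F_near: "((\<lambda>z. c * norm (F z - F y)) \<longlongrightarrow> 0) (at y within S)" for c
  proof -
    have "((\<lambda>z. c * norm (F z - F y)) \<longlongrightarrow> c * norm (F y - F y)) (at y within S)"
      by (intro tendsto_intros F)
    then show ?thesis by simp
  qed
  have "eventually (\<lambda>z. M * norm (F z - F y) < 1/2) (at y within S)"
    using order_tendstoD(2)[OF F_near, of "1/2"] by simp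
  moreover have "eventually (\<lambda>z. z \<in> S) (at y within S)"
    by (simp add: eventually_at_filter)
  ultimately have "eventually (\<lambda>z. norm (blinv (F z) - blinv (F y)) \<le> 2 * M * M * norm (F z - F y))
      (at y within S)"
  proof eventually_elim
    case (elim z)
    have "norm (blinv (F z) - blinv (F y)) = norm (blinv (F z) o\<^sub>L (F z - F y) o\<^sub>L blinv (F y))"
      using blinv_diff[of "F y" "F z"] inv elim \<open>y \<in> S\<close> by simp
    also have "\<dots> \<le> norm (blinv (F z)) * norm (F z - F y) * M"
      unfolding M_def by (intro order_trans[OF norm_blinfun_compose] mult_right_mono norm_blinfun_compose norm_ge_zero)
    also have "\<dots> \<le> 2 * M * norm (F z - F y) * M"
      using norm_blinv_perturbation_le[of "F y" "F z"] elim inv \<open>y \<in> S\<close>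
      by (simp add: M_def mult_right_mono)
    finally show ?case by (simp add: mult_ac)
  qed
  with F_near show ?thesis
    by (subst LIM_zero_iff[symmetric]) (rule Lim_null_comparison)
qed

text \<open>On \<open>S\<close>, \<open>F\<^sup>-\<^sup>1 z = F\<^sup>-\<^sup>1 y - F\<^sup>-\<^sup>1 z (F z - F y) F\<^sup>-\<^sup>1 y\<close>, and the second factor vanishes at \<open>y\<close>.\<close>
lemma blinv_has_derivative_within:
  assumes F: "(F has_derivative F') (at y within S)"
    and inv: "\<And>z. z \<in> S \<Longrightarrow> blinvertible (F z)" and "y \<in> S"
  shows "((\<lambda>z. blinv (F z)) has_derivative (\<lambda>h. - (blinv (F y) o\<^sub>L F' h o\<^sub>L blinv (F y))))
    (at y within S)"
proof -
  have cont: "((\<lambda>z. blinv (F z)) \<longlongrightarrow> blinv (F y)) (at y within S)"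
    using F inv \<open>y \<in> S\<close> by (intro blinv_tendsto_within) (auto dest: has_derivative_continuous simp: continuous_within)
  have "((\<lambda>z. (F z - F y) o\<^sub>L blinv (F y)) has_derivative (\<lambda>h. F' h o\<^sub>L blinv (F y))) (at y within S)"
    by (auto intro!: derivative_eq_intros F)
  from has_derivative_diff[OF has_derivative_const[of "blinv (F y)"] blinfun_compose.has_derivative_vanishing_factor[OF cont this]]
  have "((\<lambda>z. blinv (F y) - (blinv (F z) o\<^sub>L ((F z - F y) o\<^sub>L blinv (F y)))) has_derivative
      (\<lambda>h. - (blinv (F y) o\<^sub>L F' h o\<^sub>L blinv (F y)))) (at y within S)"
    by (simp add: blinfun_compose_assoc)
  then show ?thesis
  proof (rule has_derivative_transform_within[OF _ zero_less_one \<open>y \<in> S\<close>])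
    fix z assume "z \<in> S"
    then have "blinv (F z) - blinv (F y) = - (blinv (F z) o\<^sub>L (F z - F y) o\<^sub>L blinv (F y))"
      using inv \<open>y \<in> S\<close> by (intro blinv_diff) auto
    then show "blinv (F y) - (blinv (F z) o\<^sub>L ((F z - F y) o\<^sub>L blinv (F y))) = blinv (F z)"
      by (simp add: blinfun_compose_assoc algebra_simps)
  qed
qed

section \<open>Families of functions closed under differentiation\<close>

definition derivative_closed ::
  "'a::real_normed_vector set \<Rightarrow> 'a set \<Rightarrow> ('a \<Rightarrow> 'b::real_normed_vector) set \<Rightarrow> bool" where
  "derivative_closed S V \<Phi> \<longleftrightarrow> (\<forall>g\<in>\<Phi>. \<exists>g'. (\<forall>v\<in>V. g' v \<in> \<Phi>) \<and>
      (\<forall>x\<in>S. (g has_derivative (\<lambda>v. g' v x)) (at x within S)))"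

lemma derivative_closedE:
  assumes "derivative_closed S V \<Phi>" "g \<in> \<Phi>"
  obtains g' where "\<forall>v\<in>V. g' v \<in> \<Phi>"
    and "\<forall>x\<in>S. (g has_derivative (\<lambda>v. g' v x)) (at x within S)"
  using assms unfolding derivative_closed_def by blast

lemma derivative_closed_iterated_derivatives:
  assumes "derivative_closed S UNIV \<Phi>" "g \<in> \<Phi>"
  obtains D where "D [] = g" "\<And>vs. D vs \<in> \<Phi>"
    and "\<And>vs x. x \<in> S \<Longrightarrow> (D vs has_derivative (\<lambda>v. D (v # vs) x)) (at x within S)"
proof -
  obtain d where d: "\<forall>h\<in>\<Phi>. (\<forall>v. d h v \<in> \<Phi>) \<and> (\<forall>x\<in>S. (h has_derivative (\<lambda>v. d h v x)) (at x within S))"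
    using bchoice[OF assms(1)[unfolded derivative_closed_def]] by auto
  define D where "D = rec_list g (\<lambda>v vs h. d h v)"
  have D_simps: "D [] = g" "D (v # vs) = d (D vs) v" for v vs
    by (simp_all add: D_def)
  have D_mem: "D vs \<in> \<Phi>" for vs
  proof (induction vs)
    case (Cons v vs)
    then show ?case
      using d by (simp add: D_simps)
  qed (simp add: D_simps assms(2))
  show ?thesis
  proof (rule that)
    show "(D vs has_derivative (\<lambda>v. D (v # vs) x)) (at x within S)" if "x \<in> S" for vs x
      using d D_mem[of vs] that by (simp add: D_simps)
  qed (simp_all add: D_simps D_mem)
qed

lemma smooth_on_iff_derivative_closed:
  "smooth_on S f \<longleftrightarrow> (\<exists>\<Phi>. derivative_closed S UNIV \<Phi> \<and> (\<exists>g\<in>\<Phi>. \<forall>x\<in>S. g x = f x))"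
proof
  assume "smooth_on S f"
  then obtain D where D: "\<forall>x\<in>S. D [] x = f x"
    "\<forall>vs. \<forall>x\<in>S. (D vs has_derivative (\<lambda>v. D (v # vs) x)) (at x within S)"
    unfolding smooth_on_def by blast
  have "derivative_closed S UNIV (range D)"
    unfolding derivative_closed_def
  proof
    fix h
    assume "h \<in> range D"
    then obtain vs where "h = D vs"
      by blast
    then show "\<exists>h'. (\<forall>v\<in>UNIV. h' v \<in> range D) \<and>
        (\<forall>x\<in>S. (h has_derivative (\<lambda>v. h' v x)) (at x within S))"
      using D(2) by (intro exI[of _ "\<lambda>v. D (v # vs)"]) auto
  qed
  with D(1) show "\<exists>\<Phi>. derivative_closed S UNIV \<Phi> \<and> (\<exists>g\<in>\<Phi>. \<forall>x\<in>S. g x = f x)"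
    by (intro exI[of _ "range D"] conjI bexI[of _ "D []"]) auto
next
  assume "\<exists>\<Phi>. derivative_closed S UNIV \<Phi> \<and> (\<exists>g\<in>\<Phi>. \<forall>x\<in>S. g x = f x)"
  then obtain \<Phi> g where "derivative_closed S UNIV \<Phi>" "g \<in> \<Phi>" "\<forall>x\<in>S. g x = f x"
    by blast
  then obtain D where "D [] = g"
    "\<And>vs x. x \<in> S \<Longrightarrow> (D vs has_derivative (\<lambda>v. D (v # vs) x)) (at x within S)"
    using derivative_closed_iterated_derivatives by blast
  with \<open>\<forall>x\<in>S. g x = f x\<close> show "smooth_on S f"
    unfolding smooth_on_def by (intro exI[of _ D]) auto
qed

lemma smooth_bounded_on_derivative_closed:
  assumes "derivative_closed S UNIV \<Phi>" "\<And>h. h \<in> \<Phi> \<Longrightarrow> bounded (h ` S)"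
    and "g \<in> \<Phi>" "\<And>x. x \<in> S \<Longrightarrow> g x = f x"
  shows "smooth_bounded_on S f"
proof -
  obtain D where "D [] = g" "\<And>vs. D vs \<in> \<Phi>"
    "\<And>vs x. x \<in> S \<Longrightarrow> (D vs has_derivative (\<lambda>v. D (v # vs) x)) (at x within S)"
    using derivative_closed_iterated_derivatives[OF assms(1,3)] by blast
  with assms(2,4) show ?thesis
    unfolding smooth_bounded_on_def by (intro exI[of _ D]) auto
qed

lemma smooth_bounded_on_imp_derivative_closed:
  assumes "smooth_bounded_on S f"
  obtains \<Phi> g where "derivative_closed S Basis \<Phi>" "\<forall>h\<in>\<Phi>. bounded (h ` S)"
    and "g \<in> \<Phi>" "\<forall>x\<in>S. g x = f x"
proof -
  obtain D where D: "\<forall>x\<in>S. D [] x = f x"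
    "\<forall>vs. \<forall>x\<in>S. (D vs has_derivative (\<lambda>v. D (v # vs) x)) (at x within S)"
    "\<forall>vs\<in>lists Basis. bounded (D vs ` S)"
    using assms unfolding smooth_bounded_on_def by blast
  have "derivative_closed S Basis (D ` lists Basis)"
    unfolding derivative_closed_def
  proof
    fix h
    assume "h \<in> D ` lists Basis"
    then obtain vs where "vs \<in> lists Basis" "h = D vs"
      by blast
    then show "\<exists>h'. (\<forall>v\<in>Basis. h' v \<in> D ` lists Basis) \<and>
        (\<forall>x\<in>S. (h has_derivative (\<lambda>v. h' v x)) (at x within S))"
      using D(2) by (intro exI[of _ "\<lambda>v. D (v # vs)"]) auto
  qed
  with D(1,3) show ?thesis
    by (intro that[of "D ` lists Basis" "D []"]) auto
qed

lemma smooth_bounded_on_imp_continuous_on: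
  assumes "smooth_bounded_on S f"
  shows "continuous_on S f"
proof -
  obtain D where D: "\<forall>x\<in>S. D [] x = f x"
    "\<forall>x\<in>S. (D [] has_derivative (\<lambda>v. D [v] x)) (at x within S)"
    using assms unfolding smooth_bounded_on_def by blast
  then have "continuous_on S (D [])"
    by (intro has_derivative_continuous_on) auto
  then show ?thesis
    by (rule continuous_on_eq) (use D(1) in auto)
qed

section \<open>Derivatives of the inverse\<close>

fun blinv_word ::
  "('a \<Rightarrow> 'b::real_normed_vector \<Rightarrow>\<^sub>L 'c::real_normed_vector) \<Rightarrow> ('a \<Rightarrow> 'b \<Rightarrow>\<^sub>L 'c) list \<Rightarrow> 'a \<Rightarrow> 'c \<Rightarrow>\<^sub>L 'b"
  where
    "blinv_word F [] x = blinv (F x)"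
  | "blinv_word F (A # As) x = blinv (F x) o\<^sub>L A x o\<^sub>L blinv_word F As x"

lemma blinv_word_Cons: "blinv_word F (A # As) = (\<lambda>x. blinv (F x) o\<^sub>L A x o\<^sub>L blinv_word F As x)"
  by auto

text \<open>Since \<open>(F\<^sup>-\<^sup>1)' = - F\<^sup>-\<^sup>1 F' F\<^sup>-\<^sup>1\<close>, the derivatives of \<open>F\<^sup>-\<^sup>1\<close> of all orders are sums
  of words \<open>\<plusminus> F\<^sup>-\<^sup>1 A\<^sub>1 F\<^sup>-\<^sup>1 \<dots> A\<^sub>k F\<^sup>-\<^sup>1\<close> whose letters \<open>A\<^sub>i\<close> are derivatives of \<open>F\<close>.\<close>
inductive_set blinv_word_sums ::
  "('a \<Rightarrow> 'b::real_normed_vector \<Rightarrow>\<^sub>L 'c::real_normed_vector) \<Rightarrow> ('a \<Rightarrow> 'b \<Rightarrow>\<^sub>L 'c) set \<Rightarrow> ('a \<Rightarrow> 'c \<Rightarrow>\<^sub>L 'b) set"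
  for F \<Phi> where
    word: "set As \<subseteq> \<Phi> \<Longrightarrow> blinv_word F As \<in> blinv_word_sums F \<Phi>"
  | add: "f \<in> blinv_word_sums F \<Phi> \<Longrightarrow> g \<in> blinv_word_sums F \<Phi> \<Longrightarrow> (\<lambda>x. f x + g x) \<in> blinv_word_sums F \<Phi>"
  | uminus: "f \<in> blinv_word_sums F \<Phi> \<Longrightarrow> (\<lambda>x. - f x) \<in> blinv_word_sums F \<Phi>"

lemma blinv_word_sums_compose_left:
  assumes "f \<in> blinv_word_sums F \<Phi>" "A \<in> \<Phi>"
  shows "(\<lambda>x. blinv (F x) o\<^sub>L A x o\<^sub>L f x) \<in> blinv_word_sums F \<Phi>"
  using assms(1)
proof induction
  case (word As)
  then have "blinv_word F (A # As) \<in> blinv_word_sums F \<Phi>"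
    using assms(2) by (intro blinv_word_sums.word) auto
  then show ?case
    by (simp add: blinv_word_Cons)
next
  case (add f g)
  then show ?case
    using blinv_word_sums.add by (simp add: blinfun_compose.add_right)
next
  case (uminus f)
  then show ?case
    using blinv_word_sums.uminus by (simp add: blinfun_compose.minus_right)
qed

lemma blinv_word_Cons_has_derivative:
  assumes G: "((\<lambda>x. blinv (F x)) has_derivative (\<lambda>v. - blinv_word F [F' v] x)) (at x within S)"
    and A: "(A has_derivative (\<lambda>v. A' v x)) (at x within S)"
    and W: "(blinv_word F As has_derivative (\<lambda>v. W' v x)) (at x within S)"
  shows "(blinv_word F (A # As) has_derivative (\<lambda>v. (blinv (F x) o\<^sub>L A x o\<^sub>L W' v x)
    + (blinv_word F (A' v # As) x + - blinv_word F (F' v # A # As) x))) (at x within S)"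
proof -
  have "((\<lambda>x. blinv (F x) o\<^sub>L A x o\<^sub>L blinv_word F As x) has_derivative
      (\<lambda>v. ((blinv (F x) o\<^sub>L A x) o\<^sub>L W' v x)
        + (((blinv (F x) o\<^sub>L A' v x) + (- blinv_word F [F' v] x o\<^sub>L A x)) o\<^sub>L blinv_word F As x)))
      (at x within S)"
    by (intro blinfun_compose.FDERIV G A W)
  then show ?thesis
    unfolding blinv_word_Cons
    by (simp add: blinfun_compose_assoc blinfun_compose.add_left blinfun_compose.diff_left
        blinfun_compose.minus_left)
qed

lemma blinv_word_has_derivative:
  assumes \<Phi>: "derivative_closed S UNIV \<Phi>"
    and F': "\<And>v. F' v \<in> \<Phi>" "\<And>x. x \<in> S \<Longrightarrow> (F has_derivative (\<lambda>v. F' v x)) (at x within S)"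
    and inv: "\<And>x. x \<in> S \<Longrightarrow> blinvertible (F x)" and "set As \<subseteq> \<Phi>"
  shows "\<exists>W'. (\<forall>v. W' v \<in> blinv_word_sums F \<Phi>) \<and>
    (\<forall>x\<in>S. (blinv_word F As has_derivative (\<lambda>v. W' v x)) (at x within S))"
proof -
  let ?\<Psi> = "blinv_word_sums F \<Phi>"
  have blinv_deriv: "((\<lambda>x. blinv (F x)) has_derivative (\<lambda>v. - blinv_word F [F' v] x)) (at x within S)"
    if "x \<in> S" for x
    using blinv_has_derivative_within[OF F'(2)[OF that] inv that] by simp
  show ?thesis
    using \<open>set As \<subseteq> \<Phi>\<close>
  proof (induction As)
    case Nil
    have "(\<lambda>x. - blinv_word F [F' v] x) \<in> ?\<Psi>" for v
      using F'(1) by (intro blinv_word_sums.intros) auto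
    with blinv_deriv show ?case
      by (intro exI[of _ "\<lambda>v x. - blinv_word F [F' v] x"]) auto
  next
    case (Cons A As)
    have "A \<in> \<Phi>"
      using Cons.prems by simp
    then obtain A' where A': "\<forall>v\<in>UNIV. A' v \<in> \<Phi>" "\<forall>x\<in>S. (A has_derivative (\<lambda>v. A' v x)) (at x within S)"
      by (rule derivative_closedE[OF \<Phi>])
    obtain W' where W': "\<And>v. W' v \<in> ?\<Psi>"
      "\<And>x. x \<in> S \<Longrightarrow> (blinv_word F As has_derivative (\<lambda>v. W' v x)) (at x within S)"
      using Cons by auto
    define W'' where "W'' v x = (blinv (F x) o\<^sub>L A x o\<^sub>L W' v x)
      + (blinv_word F (A' v # As) x + - blinv_word F (F' v # A # As) x)" for v x
    have "W'' v \<in> ?\<Psi>" for v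
      unfolding W''_def using Cons.prems A'(1) F'(1) W'(1)
      by (intro blinv_word_sums.intros blinv_word_sums_compose_left) auto
    moreover have "(blinv_word F (A # As) has_derivative (\<lambda>v. W'' v x)) (at x within S)" if "x \<in> S" for x
      unfolding W''_def using that by (intro blinv_word_Cons_has_derivative blinv_deriv A'(2)[rule_format] W'(2))
    ultimately show ?case
      by blast
  qed
qed

lemma blinv_word_sums_derivative_closed:
  assumes \<Phi>: "derivative_closed S UNIV \<Phi>" and "F \<in> \<Phi>"
    and inv: "\<And>x. x \<in> S \<Longrightarrow> blinvertible (F x)"
  shows "derivative_closed S UNIV (blinv_word_sums F \<Phi>)"
  unfolding derivative_closed_def
proof
  let ?\<Psi> = "blinv_word_sums F \<Phi>"
  obtain F' where F': "\<forall>v\<in>UNIV. F' v \<in> \<Phi>" "\<forall>x\<in>S. (F has_derivative (\<lambda>v. F' v x)) (at x within S)"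
    by (rule derivative_closedE[OF \<Phi> \<open>F \<in> \<Phi>\<close>])
  fix f
  assume "f \<in> ?\<Psi>"
  then show "\<exists>f'. (\<forall>v\<in>UNIV. f' v \<in> ?\<Psi>) \<and> (\<forall>x\<in>S. (f has_derivative (\<lambda>v. f' v x)) (at x within S))"
  proof induction
    case (word As)
    then show ?case
      using blinv_word_has_derivative[OF \<Phi> _ _ inv, of F'] F' by simp
  next
    case (add f g)
    then obtain f' g' where "\<forall>v. f' v \<in> ?\<Psi>" "\<forall>x\<in>S. (f has_derivative (\<lambda>v. f' v x)) (at x within S)"
      "\<forall>v. g' v \<in> ?\<Psi>" "\<forall>x\<in>S. (g has_derivative (\<lambda>v. g' v x)) (at x within S)"
      by auto
    then show ?case
      by (intro exI[of _ "\<lambda>v x. f' v x + g' v x"]) (auto intro: blinv_word_sums.add has_derivative_add)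
  next
    case (uminus f)
    then obtain f' where "\<forall>v. f' v \<in> ?\<Psi>" "\<forall>x\<in>S. (f has_derivative (\<lambda>v. f' v x)) (at x within S)"
      by auto
    then show ?case
      by (intro exI[of _ "\<lambda>v x. - f' v x"]) (auto intro: blinv_word_sums.uminus has_derivative_minus)
  qed
qed

lemma blinv_word_sums_bounded:
  assumes "\<And>A. A \<in> \<Phi> \<Longrightarrow> bounded (A ` S)" and "bounded ((\<lambda>x. blinv (F x)) ` S)"
    and "f \<in> blinv_word_sums F \<Phi>"
  shows "bounded (f ` S)"
  using assms(3)
proof induction
  case (word As)
  then show ?case
    by (induction As) (auto simp: assms intro!: blinfun_compose.bounded_image_prod)
qed (auto intro: bounded_plus_comp)

lemma smooth_on_blinv:
  assumes "smooth_on S F" and "\<And>x. x \<in> S \<Longrightarrow> blinvertible (F x)"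
  shows "smooth_on S (\<lambda>x. blinv (F x))"
proof -
  obtain \<Phi> G where \<Phi>: "derivative_closed S UNIV \<Phi>" and "G \<in> \<Phi>" and G: "\<forall>x\<in>S. G x = F x"
    using assms(1) unfolding smooth_on_iff_derivative_closed by blast
  then have "derivative_closed S UNIV (blinv_word_sums G \<Phi>)"
    using assms(2) by (intro blinv_word_sums_derivative_closed) auto
  moreover have "blinv_word G [] \<in> blinv_word_sums G \<Phi>"
    by (rule blinv_word_sums.word) simp
  moreover have "\<forall>x\<in>S. blinv_word G [] x = blinv (F x)"
    using G by simp
  ultimately show ?thesis
    unfolding smooth_on_iff_derivative_closed by blast
qed

lemma blinv_word_sums_smooth_bounded_on:
  assumes "derivative_closed S UNIV \<Phi>" "\<And>A. A \<in> \<Phi> \<Longrightarrow> bounded (A ` S)" "F \<in> \<Phi>"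
    and "\<And>x. x \<in> S \<Longrightarrow> blinvertible (F x)" "bounded ((\<lambda>x. blinv (F x)) ` S)"
  shows "smooth_bounded_on S (\<lambda>x. blinv (F x))"
proof (rule smooth_bounded_on_derivative_closed)
  show "derivative_closed S UNIV (blinv_word_sums F \<Phi>)"
    using assms(1,3,4) by (rule blinv_word_sums_derivative_closed)
  show "bounded (f ` S)" if "f \<in> blinv_word_sums F \<Phi>" for f
    using assms(2,5) that by (rule blinv_word_sums_bounded)
  show "blinv_word F [] \<in> blinv_word_sums F \<Phi>"
    by (rule blinv_word_sums.word) simp
qed simp

section \<open>Composition with a change of variables\<close>

lemma linear_eq_sum_Basis:
  assumes "linear f"
  shows "f v = (\<Sum>j\<in>Basis. (v \<bullet> j) *\<^sub>R f j)"
proof -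
  have "f v = f (\<Sum>j\<in>Basis. (v \<bullet> j) *\<^sub>R j)"
    by (simp add: euclidean_representation)
  then show ?thesis
    using assms by (simp add: linear_sum linear_scale)
qed

lemma has_derivative_scaleR_compose:
  fixes N :: "'a::real_normed_vector \<Rightarrow> 'c::euclidean_space"
  assumes c: "(c has_derivative c') (at y within S)"
    and g: "\<And>z. z \<in> T \<Longrightarrow> (g has_derivative (\<lambda>v. g' v z)) (at z within T)"
    and N: "N ` S \<subseteq> T" "y \<in> S" "(N has_derivative N') (at y within S)"
  shows "((\<lambda>y. c y *\<^sub>R g (N y)) has_derivative
    (\<lambda>v. (\<Sum>j\<in>Basis. (c y * (N' v \<bullet> j)) *\<^sub>R g' j (N y)) + c' v *\<^sub>R g (N y))) (at y within S)"
proof -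
  have chain: "((\<lambda>y. g (N y)) has_derivative (\<lambda>v. g' (N' v) (N y))) (at y within S)"
    using has_derivative_in_compose2[of T g "\<lambda>z v. g' v z" N S y N'] g N by auto
  have "linear (\<lambda>v. g' v (N y))"
    using g N(1,2) by (intro has_derivative_linear[of _ _ "at (N y) within T"]) auto
  then have expand: "g' (N' v) (N y) = (\<Sum>j\<in>Basis. (N' v \<bullet> j) *\<^sub>R g' j (N y))" for v
    by (rule linear_eq_sum_Basis)
  from has_derivative_scaleR[OF c chain] show ?thesis
    by (simp add: expand scaleR_sum_right)
qed

inductive_set coeff_compose_sums ::
  "('a \<Rightarrow> real) set \<Rightarrow> ('c \<Rightarrow> 'b::real_vector) set \<Rightarrow> ('a \<Rightarrow> 'c) \<Rightarrow> ('a \<Rightarrow> 'b) set"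
  for K \<Phi> N where
    zero: "(\<lambda>y. 0) \<in> coeff_compose_sums K \<Phi> N"
  | add_term: "c \<in> K \<Longrightarrow> g \<in> \<Phi> \<Longrightarrow> f \<in> coeff_compose_sums K \<Phi> N \<Longrightarrow>
      (\<lambda>y. c y *\<^sub>R g (N y) + f y) \<in> coeff_compose_sums K \<Phi> N"

lemma coeff_compose_sums_add:
  assumes "f \<in> coeff_compose_sums K \<Phi> N" "h \<in> coeff_compose_sums K \<Phi> N"
  shows "(\<lambda>y. f y + h y) \<in> coeff_compose_sums K \<Phi> N"
  using assms(1)
proof induction
  case (add_term c g f)
  then show ?case
    using coeff_compose_sums.add_term[of c K g \<Phi> "\<lambda>y. f y + h y"] by (simp add: add.assoc)
qed (simp add: assms(2))

lemma coeff_compose_sums_sum: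
  assumes "finite J" "\<And>j. j \<in> J \<Longrightarrow> c j \<in> K" "\<And>j. j \<in> J \<Longrightarrow> g j \<in> \<Phi>"
  shows "(\<lambda>y. \<Sum>j\<in>J. c j y *\<^sub>R g j (N y)) \<in> coeff_compose_sums K \<Phi> N"
  using assms
proof (induction J rule: finite_induct)
  case empty
  then show ?case
    using coeff_compose_sums.zero by simp
next
  case (insert j J)
  then show ?case
    using coeff_compose_sums.add_term[of "c j" K "g j" \<Phi> "\<lambda>y. \<Sum>j\<in>J. c j y *\<^sub>R g j (N y)"] by simp
qed

lemma coeff_compose_sums_derivative_closed:
  assumes \<Phi>: "derivative_closed T Basis \<Phi>"
    and N: "\<And>y. y \<in> S \<Longrightarrow> N y \<in> T" "\<And>y. y \<in> S \<Longrightarrow> (N has_derivative N' y) (at y within S)"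
    and K: "derivative_closed S UNIV K" "\<And>c1 c2. c1 \<in> K \<Longrightarrow> c2 \<in> K \<Longrightarrow> (\<lambda>y. c1 y * c2 y) \<in> K"
      "\<And>v j. j \<in> Basis \<Longrightarrow> (\<lambda>y. N' y v \<bullet> j) \<in> K"
  shows "derivative_closed S UNIV (coeff_compose_sums K \<Phi> N)"
  unfolding derivative_closed_def
proof
  let ?\<Psi> = "coeff_compose_sums K \<Phi> N"
  fix f
  assume "f \<in> ?\<Psi>"
  then show "\<exists>f'. (\<forall>v\<in>UNIV. f' v \<in> ?\<Psi>) \<and> (\<forall>y\<in>S. (f has_derivative (\<lambda>v. f' v y)) (at y within S))"
  proof induction
    case zero
    show ?case
      by (intro exI[of _ "\<lambda>v y. 0"]) (simp add: coeff_compose_sums.zero)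
  next
    case (add_term c g f)
    obtain c' where c': "\<forall>v\<in>UNIV. c' v \<in> K" "\<forall>y\<in>S. (c has_derivative (\<lambda>v. c' v y)) (at y within S)"
      using K(1) \<open>c \<in> K\<close> by (rule derivative_closedE)
    obtain g' where g': "\<forall>j\<in>Basis. g' j \<in> \<Phi>" "\<forall>z\<in>T. (g has_derivative (\<lambda>v. g' v z)) (at z within T)"
      using \<Phi> \<open>g \<in> \<Phi>\<close> by (rule derivative_closedE)
    obtain f' where f': "\<forall>v. f' v \<in> ?\<Psi>" "\<forall>y\<in>S. (f has_derivative (\<lambda>v. f' v y)) (at y within S)"
      using add_term.IH by auto
    define f'' where "f'' v y = (\<Sum>j\<in>Basis. (c y * (N' y v \<bullet> j)) *\<^sub>R g' j (N y))
      + (c' v y *\<^sub>R g (N y) + f' v y)" for v y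
    have "f'' v \<in> ?\<Psi>" for v
      unfolding f''_def using add_term.hyps(1,2) c'(1) g'(1) f'(1) K(2,3)
      by (intro coeff_compose_sums_add coeff_compose_sums_sum coeff_compose_sums.add_term) auto
    moreover have "((\<lambda>y. c y *\<^sub>R g (N y) + f y) has_derivative (\<lambda>v. f'' v y)) (at y within S)"
      if "y \<in> S" for y
    proof (rule has_derivative_eq_rhs[OF has_derivative_add[OF has_derivative_scaleR_compose[where T = T]]])
      show "(c has_derivative (\<lambda>v. c' v y)) (at y within S)" "(f has_derivative (\<lambda>v. f' v y)) (at y within S)"
        using c'(2) f'(2) that by auto
    qed (use g'(2) N that in \<open>auto simp: f''_def add.assoc\<close>)
    ultimately show ?case
      by blast
  qed
qed

lemma coeff_compose_sums_bounded:
  fixes f :: "'a \<Rightarrow> 'b::real_normed_vector"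
  assumes "\<And>c. c \<in> K \<Longrightarrow> bounded (c ` S)" "\<And>g. g \<in> \<Phi> \<Longrightarrow> bounded (g ` T)"
    and "\<And>y. y \<in> S \<Longrightarrow> N y \<in> T" and "f \<in> coeff_compose_sums K \<Phi> N"
  shows "bounded (f ` S)"
  using assms(4)
proof induction
  case (add_term c g f)
  have "(\<lambda>y. g (N y)) ` S \<subseteq> g ` T"
    using assms(3) by auto
  then have "bounded ((\<lambda>y. g (N y)) ` S)"
    using assms(2)[OF add_term.hyps(2)] by (rule bounded_subset[rotated])
  with add_term show ?case
    by (intro bounded_plus_comp bounded_bilinear.bounded_image_prod[OF bounded_bilinear_scaleR] assms(1))
qed (auto simp: bounded_iff)

lemma smooth_bounded_on_cong:
  "S = S' \<Longrightarrow> (\<And>x. x \<in> S' \<Longrightarrow> f x = g x) \<Longrightarrow> smooth_bounded_on S f = smooth_bounded_on S' g"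
  unfolding smooth_bounded_on_def by simp

definition smooth_coefficients :: "'a::real_normed_vector set \<Rightarrow> ('a \<Rightarrow> real) set \<Rightarrow> bool" where
  "smooth_coefficients S K \<longleftrightarrow> derivative_closed S UNIV K \<and> (\<lambda>y. 1) \<in> K \<and>
     (\<forall>c1\<in>K. \<forall>c2\<in>K. (\<lambda>y. c1 y * c2 y) \<in> K) \<and> (\<forall>c\<in>K. bounded (c ` S))"

lemma smooth_bounded_on_blinv_compose:
  fixes q :: "'c::euclidean_space \<Rightarrow> 'b::real_normed_vector \<Rightarrow>\<^sub>L 'e::real_normed_vector"
    and N :: "'a::euclidean_space \<Rightarrow> 'c"
  assumes q: "smooth_bounded_on T q"
    and N: "\<And>y. y \<in> S \<Longrightarrow> N y \<in> T" "\<And>y. y \<in> S \<Longrightarrow> (N has_derivative N' y) (at y within S)"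
    and K: "smooth_coefficients S K" "\<And>v j. j \<in> Basis \<Longrightarrow> (\<lambda>y. N' y v \<bullet> j) \<in> K"
    and inv: "\<And>y. y \<in> S \<Longrightarrow> blinvertible (q (N y))" "bounded ((\<lambda>y. blinv (q (N y))) ` S)"
  shows "smooth_bounded_on S (\<lambda>y. blinv (q (N y)))"
proof -
  obtain \<Phi> g where \<Phi>: "derivative_closed T Basis \<Phi>" "\<forall>h\<in>\<Phi>. bounded (h ` T)"
    and "g \<in> \<Phi>" and g: "\<forall>z\<in>T. g z = q z"
    using q by (rule smooth_bounded_on_imp_derivative_closed)
  have K_closed: "derivative_closed S UNIV K" and "(\<lambda>y. 1) \<in> K"
    and K_mult: "\<And>c1 c2. c1 \<in> K \<Longrightarrow> c2 \<in> K \<Longrightarrow> (\<lambda>y. c1 y * c2 y) \<in> K"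
    and K_bounded: "\<And>c. c \<in> K \<Longrightarrow> bounded (c ` S)"
    using K(1) unfolding smooth_coefficients_def by auto
  let ?\<Psi> = "coeff_compose_sums K \<Phi> N"
  define F where "F y = 1 *\<^sub>R g (N y) + 0" for y
  have F: "F y = q (N y)" if "y \<in> S" for y
    using g N(1)[OF that] by (simp add: F_def)
  have "F \<in> ?\<Psi>"
    unfolding F_def[abs_def] using \<open>(\<lambda>y. 1) \<in> K\<close> \<open>g \<in> \<Phi>\<close> coeff_compose_sums.zero
    by (rule coeff_compose_sums.add_term)
  moreover have "derivative_closed S UNIV ?\<Psi>"
    using \<Phi>(1) N K_closed K_mult K(2) by (rule coeff_compose_sums_derivative_closed)
  moreover have "bounded (f ` S)" if "f \<in> ?\<Psi>" for f
    using K_bounded \<Phi>(2)[rule_format] N(1) that by (rule coeff_compose_sums_bounded)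
  moreover have "(\<lambda>y. blinv (F y)) ` S = (\<lambda>y. blinv (q (N y))) ` S"
    by (rule image_cong) (simp_all add: F)
  ultimately have "smooth_bounded_on S (\<lambda>y. blinv (F y))"
    using inv F by (intro blinv_word_sums_smooth_bounded_on[of S ?\<Psi>]) auto
  moreover have "smooth_bounded_on S (\<lambda>y. blinv (F y)) = smooth_bounded_on S (\<lambda>y. blinv (q (N y)))"
    by (rule smooth_bounded_on_cong) (simp_all add: F)
  ultimately show ?thesis
    by simp
qed

section \<open>Normalisation of the angular variable\<close>

inductive_set inverse_norm_polys :: "('v::real_inner \<Rightarrow> real) set" where
    const: "(\<lambda>\<phi>. a) \<in> inverse_norm_polys"
  | inner: "(\<lambda>\<phi>. \<phi> \<bullet> u) \<in> inverse_norm_polys"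
  | inverse_norm: "(\<lambda>\<phi>. inverse (norm \<phi>)) \<in> inverse_norm_polys"
  | add: "c1 \<in> inverse_norm_polys \<Longrightarrow> c2 \<in> inverse_norm_polys \<Longrightarrow> (\<lambda>\<phi>. c1 \<phi> + c2 \<phi>) \<in> inverse_norm_polys"
  | mult: "c1 \<in> inverse_norm_polys \<Longrightarrow> c2 \<in> inverse_norm_polys \<Longrightarrow> (\<lambda>\<phi>. c1 \<phi> * c2 \<phi>) \<in> inverse_norm_polys"

lemma has_derivative_inverse_norm:
  fixes \<phi> :: "'v::real_inner"
  assumes "\<phi> \<noteq> 0"
  shows "((\<lambda>\<phi>. inverse (norm \<phi>)) has_derivative (\<lambda>w. - (inverse (norm \<phi>) ^ 3 * (\<phi> \<bullet> w)))) (at \<phi>)"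
proof -
  have "(norm has_derivative (\<lambda>w. w \<bullet> sgn \<phi>)) (at \<phi>)"
    using has_derivative_norm[OF assms] by simp
  then have "((\<lambda>\<phi>. inverse (norm \<phi>)) has_derivative
      (\<lambda>w. - (inverse (norm \<phi>) * (w \<bullet> sgn \<phi>) * inverse (norm \<phi>)))) (at \<phi>)"
    using assms by (intro Deriv.has_derivative_inverse) auto
  then show ?thesis
    by (rule has_derivative_eq_rhs)
      (simp add: fun_eq_iff sgn_div_norm inner_commute power3_eq_cube divide_inverse mult_ac)
qed

lemma has_derivative_sgn:
  fixes \<phi> :: "'v::real_inner"
  assumes "\<phi> \<noteq> 0"
  shows "(sgn has_derivative
    (\<lambda>w. inverse (norm \<phi>) *\<^sub>R w - (inverse (norm \<phi>) ^ 3 * (\<phi> \<bullet> w)) *\<^sub>R \<phi>)) (at \<phi>)"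
proof -
  have "((\<lambda>\<phi>. inverse (norm \<phi>) *\<^sub>R \<phi>) has_derivative
      (\<lambda>w. inverse (norm \<phi>) *\<^sub>R w + (- (inverse (norm \<phi>) ^ 3 * (\<phi> \<bullet> w))) *\<^sub>R \<phi>)) (at \<phi>)"
    by (intro has_derivative_scaleR has_derivative_inverse_norm assms has_derivative_ident)
  then show ?thesis
    by (simp add: sgn_div_norm[abs_def] fun_eq_iff)
qed

lemma inverse_norm_polys_has_derivative:
  fixes c :: "'v::real_inner \<Rightarrow> real"
  assumes "c \<in> inverse_norm_polys"
  shows "\<exists>c'. (\<forall>w. c' w \<in> inverse_norm_polys) \<and> (\<forall>\<phi>. \<phi> \<noteq> 0 \<longrightarrow> (c has_derivative (\<lambda>w. c' w \<phi>)) (at \<phi>))"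
  using assms
proof induction
  case (const a)
  show ?case
    by (intro exI[of _ "\<lambda>w \<phi>. 0"]) (simp add: inverse_norm_polys.const)
next
  case (inner u)
  have "((\<lambda>\<phi>. \<phi> \<bullet> u) has_derivative (\<lambda>w. w \<bullet> u)) (at \<phi>)" for \<phi> :: 'v
    by (rule bounded_linear_imp_has_derivative[OF bounded_linear_inner_left])
  then show ?case
    by (intro exI[of _ "\<lambda>w \<phi>. w \<bullet> u"]) (simp add: inverse_norm_polys.const)
next
  case inverse_norm
  have "(\<lambda>\<phi>. (-1) * (inverse (norm \<phi>) * (inverse (norm \<phi>) * (inverse (norm \<phi>) * (\<phi> \<bullet> w)))))
      \<in> inverse_norm_polys" for w :: 'v
    by (intro inverse_norm_polys.intros)
  then have "(\<lambda>\<phi>. - (inverse (norm \<phi>) ^ 3 * (\<phi> \<bullet> w))) \<in> inverse_norm_polys" for w :: 'v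
    by (simp add: power3_eq_cube mult_ac)
  with has_derivative_inverse_norm show ?case
    by (intro exI[of _ "\<lambda>w \<phi>. - (inverse (norm \<phi>) ^ 3 * (\<phi> \<bullet> w))"]) blast
next
  case (add c1 c2)
  from add.IH obtain c1' c2' where c': "\<forall>w. c1' w \<in> inverse_norm_polys" "\<forall>w. c2' w \<in> inverse_norm_polys"
    "\<forall>\<phi>. \<phi> \<noteq> 0 \<longrightarrow> (c1 has_derivative (\<lambda>w. c1' w \<phi>)) (at \<phi>)"
    "\<forall>\<phi>. \<phi> \<noteq> 0 \<longrightarrow> (c2 has_derivative (\<lambda>w. c2' w \<phi>)) (at \<phi>)"
    by (elim exE conjE)
  show ?case
    using c' by (intro exI[of _ "\<lambda>w \<phi>. c1' w \<phi> + c2' w \<phi>"]) (simp add: inverse_norm_polys.add has_derivative_add)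
next
  case (mult c1 c2)
  from mult.IH obtain c1' c2' where c': "\<forall>w. c1' w \<in> inverse_norm_polys" "\<forall>w. c2' w \<in> inverse_norm_polys"
    "\<forall>\<phi>. \<phi> \<noteq> 0 \<longrightarrow> (c1 has_derivative (\<lambda>w. c1' w \<phi>)) (at \<phi>)"
    "\<forall>\<phi>. \<phi> \<noteq> 0 \<longrightarrow> (c2 has_derivative (\<lambda>w. c2' w \<phi>)) (at \<phi>)"
    by (elim exE conjE)
  show ?case
    using mult.hyps c'
    by (intro exI[of _ "\<lambda>w \<phi>. c1 \<phi> * c2' w \<phi> + c1' w \<phi> * c2 \<phi>"])
      (auto simp: inverse_norm_polys.add inverse_norm_polys.mult intro!: has_derivative_mult)
qed

lemma inverse_norm_polys_derivative_closed:
  "derivative_closed (- {0}) UNIV (inverse_norm_polys :: ('v::real_inner \<Rightarrow> real) set)"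
  unfolding derivative_closed_def
proof
  fix c :: "'v \<Rightarrow> real"
  assume "c \<in> inverse_norm_polys"
  from inverse_norm_polys_has_derivative[OF this]
  show "\<exists>c'. (\<forall>w\<in>UNIV. c' w \<in> inverse_norm_polys) \<and>
      (\<forall>\<phi>\<in>- {0}. (c has_derivative (\<lambda>w. c' w \<phi>)) (at \<phi> within - {0}))"
    by (simp add: at_within_open[OF _ open_Compl[OF closed_singleton]] Ball_def)
qed

lemma inverse_norm_polys_bounded:
  assumes "c \<in> inverse_norm_polys" "0 < r"
  shows "bounded (c ` {\<phi>. r \<le> norm \<phi> \<and> norm \<phi> \<le> R})"
  using assms(1)
proof induction
  case (inner u)
  have "\<bar>\<phi> \<bullet> u\<bar> \<le> R * norm u" if "norm \<phi> \<le> R" for \<phi>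
    using Cauchy_Schwarz_ineq2[of \<phi> u] mult_right_mono[OF that norm_ge_zero[of u]] by linarith
  then show ?case
    by (auto simp: bounded_iff)
next
  case inverse_norm
  have "\<bar>inverse (norm \<phi>)\<bar> \<le> inverse r" if "r \<le> norm \<phi>" for \<phi> :: 'a
    using that assms(2) by (simp add: le_imp_inverse_le)
  then show ?case
    by (auto simp: bounded_iff)
next
  case (const a)
  show ?case
    unfolding bounded_iff by (intro exI[of _ "\<bar>a\<bar>"]) auto
next
  case (add c1 c2)
  show ?case
    by (rule bounded_plus_comp[OF add.IH])
next
  case (mult c1 c2)
  show ?case
    by (rule bounded_bilinear.bounded_image_prod[OF bounded_bilinear_mult mult.IH])
qed

lemma derivative_closed_compose_bounded_linear:
  assumes P: "bounded_linear P" and U: "open U" "\<And>y. y \<in> S \<Longrightarrow> P y \<in> U"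
    and K: "derivative_closed U UNIV K"
  shows "derivative_closed S UNIV ((\<lambda>c y. c (P y)) ` K)"
  unfolding derivative_closed_def
proof
  let ?K = "(\<lambda>c y. c (P y)) ` K"
  fix h
  assume "h \<in> ?K"
  then obtain c where c: "c \<in> K" and h: "h = (\<lambda>y. c (P y))"
    by blast
  obtain c' where c': "\<forall>w\<in>UNIV. c' w \<in> K" "\<forall>\<phi>\<in>U. (c has_derivative (\<lambda>w. c' w \<phi>)) (at \<phi> within U)"
    using K c by (rule derivative_closedE)
  have "(h has_derivative (\<lambda>v. c' (P v) (P y))) (at y within S)" if "y \<in> S" for y
  proof -
    have "(c has_derivative (\<lambda>w. c' w (P y))) (at (P y) within U)"
      using c'(2) U(2)[OF that] by blast
    moreover have "at (P y) within U = at (P y)"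
      using U that by (intro at_within_open) auto
    ultimately have "(c has_derivative (\<lambda>w. c' w (P y))) (at (P y))"
      by simp
    from has_derivative_compose[OF bounded_linear_imp_has_derivative[OF P] this]
    show ?thesis
      unfolding h by (rule has_derivative_at_withinI)
  qed
  moreover have "(\<lambda>y. c' (P v) (P y)) \<in> ?K" for v
    using c'(1) by (intro image_eqI[of _ _ "c' (P v)"]) auto
  ultimately show "\<exists>h'. (\<forall>v\<in>UNIV. h' v \<in> ?K) \<and> (\<forall>y\<in>S. (h has_derivative (\<lambda>v. h' v y)) (at y within S))"
    by (intro exI[of _ "\<lambda>v y. c' (P v) (P y)"]) auto
qed

lemma inverse_norm_polys_smooth_coefficients:
  fixes P :: "'a::real_normed_vector \<Rightarrow> 'v::real_inner"
  assumes P: "bounded_linear P" and "0 < r" and S: "\<And>y. y \<in> S \<Longrightarrow> r \<le> norm (P y) \<and> norm (P y) \<le> R"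
  shows "smooth_coefficients S ((\<lambda>c y. c (P y)) ` inverse_norm_polys)"
  unfolding smooth_coefficients_def
proof (intro conjI ballI)
  let ?K = "(\<lambda>c y. c (P y)) ` inverse_norm_polys"
  have "P y \<in> - {0}" if "y \<in> S" for y
    using S[OF that] \<open>0 < r\<close> by auto
  then show "derivative_closed S UNIV ?K"
    by (rule derivative_closed_compose_bounded_linear[OF P open_Compl[OF closed_singleton] _
          inverse_norm_polys_derivative_closed])
  show "(\<lambda>y. 1) \<in> ?K"
    by (rule image_eqI[OF _ inverse_norm_polys.const[of 1]]) simp
  show "(\<lambda>y. c1 y * c2 y) \<in> ?K" if c1: "c1 \<in> ?K" and c2: "c2 \<in> ?K" for c1 c2
  proof -
    obtain d1 d2 where "d1 \<in> inverse_norm_polys" "d2 \<in> inverse_norm_polys"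
      and "c1 = (\<lambda>y. d1 (P y))" "c2 = (\<lambda>y. d2 (P y))"
      using c1 c2 by blast
    then show ?thesis
      by (intro image_eqI[of _ _ "\<lambda>\<phi>. d1 \<phi> * d2 \<phi>"] inverse_norm_polys.mult) auto
  qed
  show "bounded (h ` S)" if "h \<in> ?K" for h
  proof -
    obtain c where c: "c \<in> inverse_norm_polys" and h: "h = (\<lambda>y. c (P y))"
      using \<open>h \<in> ?K\<close> by blast
    have "bounded (c ` {\<phi>. r \<le> norm \<phi> \<and> norm \<phi> \<le> R})"
      using c \<open>0 < r\<close> by (rule inverse_norm_polys_bounded)
    moreover have "h ` S \<subseteq> c ` {\<phi>. r \<le> norm \<phi> \<and> norm \<phi> \<le> R}"
      using S unfolding h by (auto intro: imageI)
    ultimately show ?thesis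
      by (rule bounded_subset)
  qed
qed

definition angular_normalize :: "'x \<times> real \<times> 'v \<Rightarrow> 'x \<times> real \<times> 'v::real_normed_vector" where
  "angular_normalize y = (fst y, fst (snd y), sgn (snd (snd y)))"

definition angular_normalize_deriv :: "'x \<times> real \<times> 'v \<Rightarrow> 'x \<times> real \<times> 'v \<Rightarrow> 'x \<times> real \<times> 'v::real_inner"
  where "angular_normalize_deriv y v = (fst v, fst (snd v),
    inverse (norm (snd (snd y))) *\<^sub>R snd (snd v)
    - (inverse (norm (snd (snd y))) ^ 3 * (snd (snd y) \<bullet> snd (snd v))) *\<^sub>R snd (snd y))"

lemma angular_normalize_sphere: "norm \<phi> = 1 \<Longrightarrow> angular_normalize (x, r, \<phi>) = (x, r, \<phi>)"
  by (simp add: angular_normalize_def sgn_div_norm)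

lemma angular_normalize_has_derivative:
  fixes y :: "'x::real_normed_vector \<times> real \<times> 'v::real_inner"
  assumes "snd (snd y) \<noteq> 0"
  shows "(angular_normalize has_derivative (angular_normalize_deriv y)) (at y)"
proof -
  have "((\<lambda>y. snd (snd y)) has_derivative (\<lambda>v. snd (snd v))) (at y)"
    by (intro derivative_intros)
  from has_derivative_compose[OF this has_derivative_sgn[OF assms]]
  have "((\<lambda>y. sgn (snd (snd y))) has_derivative (\<lambda>v.
      inverse (norm (snd (snd y))) *\<^sub>R snd (snd v)
      - (inverse (norm (snd (snd y))) ^ 3 * (snd (snd y) \<bullet> snd (snd v))) *\<^sub>R snd (snd y))) (at y)" .
  then show ?thesis
    unfolding angular_normalize_def[abs_def] angular_normalize_deriv_def[abs_def] by (intro derivative_intros)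
qed

lemma angular_normalize_derivative_coefficient:
  fixes v j :: "'x::real_inner \<times> real \<times> 'v::real_inner"
  shows "(\<lambda>y. angular_normalize_deriv y v \<bullet> j)
    \<in> (\<lambda>c y. c (snd (snd y))) ` inverse_norm_polys"
proof (rule image_eqI)
  let ?c = "\<lambda>\<phi>. (fst v \<bullet> fst j + fst (snd v) * fst (snd j)) + (inverse (norm \<phi>) * (snd (snd v) \<bullet> snd (snd j))
    + (-1) * (inverse (norm \<phi>) * (inverse (norm \<phi>) * (inverse (norm \<phi>) * (\<phi> \<bullet> snd (snd v))))) * (\<phi> \<bullet> snd (snd j)))"
  show "?c \<in> inverse_norm_polys"
    by (intro inverse_norm_polys.intros)
  show "(\<lambda>y. angular_normalize_deriv y v \<bullet> j)
    = (\<lambda>y. ?c (snd (snd y)))"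
    by (simp add: fun_eq_iff angular_normalize_deriv_def inner_prod_def inner_diff_left power3_eq_cube
        algebra_simps)
qed

lemma smooth_bounded_on_blinv_angular_normalize:
  fixes q :: "(real^'n) \<times> real \<times> (real^'n) \<Rightarrow> 'b::real_normed_vector \<Rightarrow>\<^sub>L 'e::real_normed_vector"
  defines "S \<equiv> UNIV \<times> {0..1} \<times> annulus TYPE('n)"
  assumes q: "smooth_bounded_on S q"
    and bound: "\<And>x r \<psi>. 0 \<le> r \<Longrightarrow> r \<le> 1 \<Longrightarrow> norm \<psi> = 1 \<Longrightarrow>
      blinvertible (q (x, r, \<psi>)) \<and> norm (blinv (q (x, r, \<psi>))) \<le> C"
  shows "smooth_bounded_on S (\<lambda>y. blinv (q (angular_normalize y)))"
proof (rule smooth_bounded_on_blinv_compose[OF q])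
  have S: "y \<in> S \<longleftrightarrow> fst (snd y) \<in> {0..1} \<and> 1/2 < norm (snd (snd y)) \<and> norm (snd (snd y)) < 2" for y
    by (auto simp: S_def annulus_def mem_Times_iff)
  have sphere: "0 \<le> fst (snd (angular_normalize y)) \<and> fst (snd (angular_normalize y)) \<le> 1
      \<and> norm (snd (snd (angular_normalize y))) = 1" if "y \<in> S" for y
    using that by (auto simp: S angular_normalize_def norm_sgn)
  show "angular_normalize y \<in> S" if "y \<in> S" for y
    using sphere[OF that] by (simp add: S)
  show "(angular_normalize has_derivative (angular_normalize_deriv y)) (at y within S)"
    if "y \<in> S" for y
  proof -
    have "snd (snd y) \<noteq> 0"
      using that by (auto simp: S)
    then show ?thesis
      by (rule has_derivative_at_withinI[OF angular_normalize_has_derivative])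
  qed
  show "smooth_coefficients S ((\<lambda>c y. c (snd (snd y))) ` inverse_norm_polys)"
    by (rule inverse_norm_polys_smooth_coefficients[where r = "1/2" and R = 2])
      (auto simp: S bounded_linear_compose[OF bounded_linear_snd bounded_linear_snd])
  show "(\<lambda>y. angular_normalize_deriv y v \<bullet> j)
    \<in> (\<lambda>c y. c (snd (snd y))) ` inverse_norm_polys" for v j :: "(real^'n) \<times> real \<times> (real^'n)"
    by (rule angular_normalize_derivative_coefficient)
  have bound_N: "blinvertible (q (angular_normalize y)) \<and> norm (blinv (q (angular_normalize y))) \<le> C"
    if "y \<in> S" for y
    using bound[of "fst (snd (angular_normalize y))" "snd (snd (angular_normalize y))" "fst (angular_normalize y)"]
      sphere[OF that] by simp
  then show "blinvertible (q (angular_normalize y))" if "y \<in> S" for y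
    using that by blast
  show "bounded ((\<lambda>y. blinv (q (angular_normalize y))) ` S)"
    unfolding bounded_iff using bound_N by (intro exI[of _ C]) auto
qed

section \<open>The inverse symbol\<close>

lemma S_HomI:
  fixes p :: "real^'n \<Rightarrow> real^'n \<Rightarrow> real \<Rightarrow> 'f::real_normed_vector"
  assumes "smooth_on (UNIV \<times> (UNIV - {0}) \<times> {0..}) (\<lambda>(x, \<xi>, \<mu>). p x \<xi> \<mu>)"
    and "\<And>x \<xi> \<mu> t. \<xi> \<noteq> 0 \<Longrightarrow> 0 \<le> \<mu> \<Longrightarrow> 0 < t \<Longrightarrow> p x (t *\<^sub>R \<xi>) (t * \<mu>) = t powr d *\<^sub>R p x \<xi> \<mu>"
    and "smooth_bounded_on (UNIV \<times> {0..1} \<times> annulus TYPE('n)) q"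
    and "\<And>x r \<phi>. 0 < r \<Longrightarrow> r \<le> 1 \<Longrightarrow> norm \<phi> = 1 \<Longrightarrow>
      q (x, r, \<phi>) = r powr (-\<nu>) *\<^sub>R p x (r *\<^sub>R \<phi>) (sqrt (1 - r\<^sup>2))"
  shows "p \<in> S_Hom d \<nu>"
  using assms unfolding S_Hom_def by blast

lemma principal_angular_symbol_eq_boundary_value:
  fixes q :: "(real^'n) \<times> real \<times> (real^'n) \<Rightarrow> 'f::real_normed_vector"
  assumes q: "continuous_on (UNIV \<times> {0..1} \<times> annulus TYPE('n)) q"
    and q_eq: "\<And>x r \<phi>. 0 < r \<Longrightarrow> r \<le> 1 \<Longrightarrow> norm \<phi> = 1 \<Longrightarrow>
      q (x, r, \<phi>) = r powr (-\<nu>) *\<^sub>R p x (r *\<^sub>R \<phi>) (sqrt (1 - r\<^sup>2))"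
    and \<psi>: "norm \<psi> = 1"
  shows "principal_angular_symbol \<nu> p x \<psi> = q (x, 0, \<psi>)"
proof -
  let ?S = "UNIV \<times> {0..1::real} \<times> annulus TYPE('n)"
  have in_S: "(x, t, \<psi>) \<in> ?S" if "0 \<le> t" "t \<le> 1" for t
    using that \<psi> by (simp add: annulus_def)
  have near_0: "eventually (\<lambda>t. t \<in> {0<..<1}) (at_right (0::real))"
    by (rule eventually_at_right_real) simp
  have "((\<lambda>t. q (x, t, \<psi>)) \<longlongrightarrow> q (x, 0, \<psi>)) (at_right 0)"
  proof (rule continuous_within_tendsto_compose[of _ ?S q])
    have "(x, 0, \<psi>) \<in> ?S"
      using in_S[of 0] by simp
    then show "continuous (at (x, 0, \<psi>) within ?S) q"
      using q continuous_on_eq_continuous_within by blast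
    show "eventually (\<lambda>t. (x, t, \<psi>) \<in> ?S) (at_right 0)"
      using near_0 by eventually_elim (intro in_S; simp)
  qed (intro tendsto_intros)
  moreover have "eventually (\<lambda>t. q (x, t, \<psi>) = t powr (-\<nu>) *\<^sub>R p x (t *\<^sub>R \<psi>) (sqrt (1 - t\<^sup>2))) (at_right 0)"
    using near_0 by eventually_elim (simp add: q_eq \<psi>)
  ultimately have "((\<lambda>t. t powr (-\<nu>) *\<^sub>R p x (t *\<^sub>R \<psi>) (sqrt (1 - t\<^sup>2))) \<longlongrightarrow> q (x, 0, \<psi>)) (at_right 0)"
    by (rule Lim_transform_eventually)
  then show ?thesis
    unfolding principal_angular_symbol_def using \<psi> by (simp add: tendsto_Lim)
qed

lemma angular_representative_inverse_bound:
  fixes p :: "real^'n \<Rightarrow> real^'n \<Rightarrow> real \<Rightarrow> ('b::real_normed_vector \<Rightarrow>\<^sub>L 'e::real_normed_vector)"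
  assumes q: "continuous_on (UNIV \<times> {0..1} \<times> annulus TYPE('n)) q"
    and q_eq: "\<And>x r \<phi>. 0 < r \<Longrightarrow> r \<le> 1 \<Longrightarrow> norm \<phi> = 1 \<Longrightarrow>
      q (x, r, \<phi>) = r powr (-\<nu>) *\<^sub>R p x (r *\<^sub>R \<phi>) (sqrt (1 - r\<^sup>2))"
    and inv1: "\<forall>x \<xi> \<mu>. \<xi> \<noteq> 0 \<and> 0 \<le> \<mu> \<longrightarrow> blinvertible (p x \<xi> \<mu>)"
    and bd1: "\<forall>x \<xi> \<mu>. \<xi> \<noteq> 0 \<and> 0 \<le> \<mu> \<and> (norm \<xi>)\<^sup>2 + \<mu>\<^sup>2 = 1 \<longrightarrow>
      norm (norm \<xi> powr \<nu> *\<^sub>R blinv (p x \<xi> \<mu>)) \<le> C1"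
    and inv2: "\<forall>x \<xi>. \<xi> \<noteq> 0 \<longrightarrow> blinvertible (principal_angular_symbol \<nu> p x \<xi>)"
    and bd2: "\<forall>x \<xi>. norm \<xi> = 1 \<longrightarrow> norm (blinv (principal_angular_symbol \<nu> p x \<xi>)) \<le> C2"
    and r: "0 \<le> r" "r \<le> 1" and \<psi>: "norm \<psi> = 1"
  shows "blinvertible (q (x, r, \<psi>)) \<and> norm (blinv (q (x, r, \<psi>))) \<le> max C1 C2"
proof (cases "r = 0")
  case True
  have boundary: "principal_angular_symbol \<nu> p x \<psi> = q (x, 0, \<psi>)"
    using q q_eq \<psi> by (rule principal_angular_symbol_eq_boundary_value)
  have "\<psi> \<noteq> 0"
    using \<psi> by auto
  then have "blinvertible (q (x, 0, \<psi>))" "norm (blinv (q (x, 0, \<psi>))) \<le> C2"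
    using inv2 bd2 \<psi> unfolding boundary[symmetric] by auto
  then show ?thesis
    using True by (auto intro: max.coboundedI2)
next
  case False
  with r have "0 < r" by simp
  let ?\<xi> = "r *\<^sub>R \<psi>" and ?\<mu> = "sqrt (1 - r\<^sup>2)"
  have \<xi>: "?\<xi> \<noteq> 0" "norm ?\<xi> = r" and \<mu>: "0 \<le> ?\<mu>" "(norm ?\<xi>)\<^sup>2 + ?\<mu>\<^sup>2 = 1"
    using \<open>0 < r\<close> r \<psi> by (auto simp: power_le_one)
  have P: "blinvertible (p x ?\<xi> ?\<mu>)"
    using inv1 \<xi> \<mu> by blast
  have q_r\<psi>: "q (x, r, \<psi>) = r powr (-\<nu>) *\<^sub>R p x ?\<xi> ?\<mu>"
    using q_eq[OF \<open>0 < r\<close> r(2) \<psi>] .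
  have "blinvertible (q (x, r, \<psi>))"
    unfolding q_r\<psi> using P by (rule blinv_scaleR(1)) (use \<open>0 < r\<close> in simp)
  moreover have "blinv (q (x, r, \<psi>)) = r powr \<nu> *\<^sub>R blinv (p x ?\<xi> ?\<mu>)"
    unfolding q_r\<psi> blinv_powr_scaleR[OF P \<open>0 < r\<close>] by simp
  moreover have "norm (r powr \<nu> *\<^sub>R blinv (p x ?\<xi> ?\<mu>)) \<le> C1"
    using bd1 \<xi> \<mu> by (metis \<xi>(2))
  ultimately show ?thesis
    by simp
qed

theorem lemma3p15:
  fixes p :: "real^'n \<Rightarrow> real^'n \<Rightarrow> real \<Rightarrow> ('e0::{real_inner,complete_space} \<Rightarrow>\<^sub>L 'e1::{real_inner,complete_space})"
    and d \<nu> :: real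
  assumes hp: "p \<in> S_Hom d \<nu>"
    and inv1: "\<forall>x \<xi> \<mu>. \<xi> \<noteq> 0 \<and> 0 \<le> \<mu> \<longrightarrow> blinvertible (p x \<xi> \<mu>)"
    and bd1: "\<exists>C. \<forall>x \<xi> \<mu>. \<xi> \<noteq> 0 \<and> 0 \<le> \<mu> \<and> (norm \<xi>)\<^sup>2 + \<mu>\<^sup>2 = 1 \<longrightarrow>
                 norm (norm \<xi> powr \<nu> *\<^sub>R blinv (p x \<xi> \<mu>)) \<le> C"
    and inv2: "\<forall>x \<xi>. \<xi> \<noteq> 0 \<longrightarrow> blinvertible (principal_angular_symbol \<nu> p x \<xi>)"
    and bd2: "\<exists>C. \<forall>x \<xi>. norm \<xi> = 1 \<longrightarrow> norm (blinv (principal_angular_symbol \<nu> p x \<xi>)) \<le> C"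
  shows "(\<lambda>x \<xi> \<mu>. blinv (p x \<xi> \<mu>)) \<in> S_Hom (-d) (-\<nu>)"
proof -
  obtain q where smooth: "smooth_on (UNIV \<times> (UNIV - {0}) \<times> {0..}) (\<lambda>(x, \<xi>, \<mu>). p x \<xi> \<mu>)"
    and hom: "\<And>x \<xi> \<mu> t. \<xi> \<noteq> 0 \<and> 0 \<le> \<mu> \<and> 0 < t \<Longrightarrow> p x (t *\<^sub>R \<xi>) (t * \<mu>) = t powr d *\<^sub>R p x \<xi> \<mu>"
    and q: "smooth_bounded_on (UNIV \<times> {0..1} \<times> annulus TYPE('n)) q"
    and q_eq: "\<And>x r \<phi>. 0 < r \<Longrightarrow> r \<le> 1 \<Longrightarrow> norm \<phi> = 1 \<Longrightarrow>
      q (x, r, \<phi>) = r powr (-\<nu>) *\<^sub>R p x (r *\<^sub>R \<phi>) (sqrt (1 - r\<^sup>2))"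
    using hp unfolding S_Hom_def by blast
  obtain C1 C2 where bd1': "\<forall>x \<xi> \<mu>. \<xi> \<noteq> 0 \<and> 0 \<le> \<mu> \<and> (norm \<xi>)\<^sup>2 + \<mu>\<^sup>2 = 1 \<longrightarrow>
      norm (norm \<xi> powr \<nu> *\<^sub>R blinv (p x \<xi> \<mu>)) \<le> C1"
    and bd2': "\<forall>x \<xi>. norm \<xi> = 1 \<longrightarrow> norm (blinv (principal_angular_symbol \<nu> p x \<xi>)) \<le> C2"
    using bd1 bd2 by blast
  have p_inv: "blinvertible (p x \<xi> \<mu>)" if "\<xi> \<noteq> 0" "0 \<le> \<mu>" for x \<xi> \<mu>
    using inv1 that by blast
  show ?thesis
  proof (rule S_HomI)
    have "smooth_on (UNIV \<times> (UNIV - {0}) \<times> {0..}) (\<lambda>y. blinv ((\<lambda>(x, \<xi>, \<mu>). p x \<xi> \<mu>) y))"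
      using smooth by (rule smooth_on_blinv) (auto intro: p_inv)
    then show "smooth_on (UNIV \<times> (UNIV - {0}) \<times> {0..}) (\<lambda>(x, \<xi>, \<mu>). blinv (p x \<xi> \<mu>))"
      by (simp add: split_def)
    show "blinv (p x (t *\<^sub>R \<xi>) (t * \<mu>)) = t powr (-d) *\<^sub>R blinv (p x \<xi> \<mu>)"
      if "\<xi> \<noteq> 0" "0 \<le> \<mu>" "0 < t" for x \<xi> \<mu> t
      using that by (simp add: hom blinv_powr_scaleR p_inv)
    show "smooth_bounded_on (UNIV \<times> {0..1} \<times> annulus TYPE('n)) (\<lambda>y. blinv (q (angular_normalize y)))"
      using q angular_representative_inverse_bound[OF smooth_bounded_on_imp_continuous_on[OF q] q_eq inv1
          bd1' inv2 bd2']
      by (rule smooth_bounded_on_blinv_angular_normalize)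
    show "blinv (q (angular_normalize (x, r, \<phi>))) = r powr (- (-\<nu>)) *\<^sub>R blinv (p x (r *\<^sub>R \<phi>) (sqrt (1 - r\<^sup>2)))"
      if "0 < r" "r \<le> 1" "norm \<phi> = 1" for x r \<phi>
      unfolding angular_normalize_sphere[OF that(3)] q_eq[OF that] using that
      by (intro blinv_powr_scaleR p_inv) (auto simp: power_le_one)
  qed
qed

end
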